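(* Under the hypotheses and notation of the preceding statement (Theorem 1), with $\tilde L_n,\tilde U_n$ defined by the recursion there, the following hold almost surely for every $n\ge1$: $$0\le\tilde L_{n-1}\le\tilde L_n\le\tilde U_n\le\tilde U_{n-1}\le1,\qquad \tilde U_n-\tilde L_n=(\tilde U_{n-1}-\tilde L_{n-1})\,\frac{U_n-L_n}{U_n^*-L_n^*},$$ and moreover $\mathbb{E}\tilde L_n=\mathbb{E}L_n=l_n$ and $\mathbb{E}\tilde U_n=\mathbb{E}U_n=u_n$ for every $n\ge1$.
   Context: Setting: $s\in[0,1]$; random variables $L_n,U_n$ ($n\ge1$), $L_0\equiv0$, $U_0\equiv1$; $\mathcal{F}_0$ trivial, $\mathcal{F}_n=\sigma\{L_n,U_n\}$, $\mathcal{F}_{k,\infty}=\sigma\{\mathcal{F}_k,\mathcal{F}_{k+1},\dots\}$; a.s. $L_n\le U_n$, $L_n,U_n\in[0,1]$; $\mathbb{E}L_n=l_n\nearrow s$, $\mathbb{E}U_n=u_n\searrow s$; $\mathbb{E}(L_{n-1}\mid\mathcal{F}_{n,\infty})=\mathbb{E}(L_{n-1}\mid\mathcal{F}_n)\le L_n$ and $\mathbb{E}(U_{n-1}\mid\mathcal{F}_{n,\infty})=\mathbb{E}(U_{n-1}\mid\mathcal{F}_n)\ge U_n$ a.s.; $L_n^*=\mathbb{E}(L_{n-1}\mid\mathcal{F}_n)$, $U_n^*=\mathbb{E}(U_{n-1}\mid\mathcal{F}_n)$ with $U_n^*>L_n^*$ a.s.; $\tilde L_0=0$, $\tilde U_0=1$,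 $\tilde L_n=\tilde L_{n-1}+\frac{L_n-L_n^*}{U_n^*-L_n^*}(\tilde U_{n-1}-\tilde L_{n-1})$, $\tilde U_n=\tilde U_{n-1}-\frac{U_n^*-U_n}{U_n^*-L_n^*}(\tilde U_{n-1}-\tilde L_{n-1})$. *)

theory Defs
  imports "HOL-Probability.Probability"
begin

definition Fn :: "'a measure \<Rightarrow> (nat \<Rightarrow> 'a \<Rightarrow> real) \<Rightarrow> (nat \<Rightarrow> 'a \<Rightarrow> real) \<Rightarrow> nat \<Rightarrow> 'a measure" where
  "Fn M L U n = vimage_algebra (space M) (\<lambda>x. (L n x, U n x)) borel"

definition Finf :: "'a measure \<Rightarrow> (nat \<Rightarrow> 'a \<Rightarrow> real) \<Rightarrow> (nat \<Rightarrow> 'a \<Rightarrow> real) \<Rightarrow> nat \<Rightarrow> 'a measure" where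
  "Finf M L U k = sigma (space M) (\<Union>j\<in>{k..}. sets (Fn M L U j))"

definition Lstar :: "'a measure \<Rightarrow> (nat \<Rightarrow> 'a \<Rightarrow> real) \<Rightarrow> (nat \<Rightarrow> 'a \<Rightarrow> real) \<Rightarrow> nat \<Rightarrow> 'a \<Rightarrow> real" where
  "Lstar M L U n = real_cond_exp M (Fn M L U n) (L (n - 1))"

definition Ustar :: "'a measure \<Rightarrow> (nat \<Rightarrow> 'a \<Rightarrow> real) \<Rightarrow> (nat \<Rightarrow> 'a \<Rightarrow> real) \<Rightarrow> nat \<Rightarrow> 'a \<Rightarrow> real" where
  "Ustar M L U n = real_cond_exp M (Fn M L U n) (U (n - 1))"

fun tildeLU :: "'a measure \<Rightarrow> (nat \<Rightarrow> 'a \<Rightarrow> real) \<Rightarrow> (nat \<Rightarrow> 'a \<Rightarrow> real) \<Rightarrow> nat \<Rightarrow> 'a \<Rightarrow> real \<times> real" where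
  "tildeLU M L U 0 x = (0, 1)"
| "tildeLU M L U (Suc n) x =
     (let a = fst (tildeLU M L U n x); b = snd (tildeLU M L U n x);
          Ls = Lstar M L U (Suc n) x; Us = Ustar M L U (Suc n) x
      in (a + (L (Suc n) x - Ls) / (Us - Ls) * (b - a),
          b - (Us - U (Suc n) x) / (Us - Ls) * (b - a)))"

definition tildeL :: "'a measure \<Rightarrow> (nat \<Rightarrow> 'a \<Rightarrow> real) \<Rightarrow> (nat \<Rightarrow> 'a \<Rightarrow> real) \<Rightarrow> nat \<Rightarrow> 'a \<Rightarrow> real" where
  "tildeL M L U n x = fst (tildeLU M L U n x)"

definition tildeU :: "'a measure \<Rightarrow> (nat \<Rightarrow> 'a \<Rightarrow> real) \<Rightarrow> (nat \<Rightarrow> 'a \<Rightarrow> real) \<Rightarrow> nat \<Rightarrow> 'a \<Rightarrow> real" where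
  "tildeU M L U n x = snd (tildeLU M L U n x)"

end

theory Submission
  imports Defs
begin

(* Write D_n = tildeU_n - tildeL_n for the width of the renormalised interval.
   The recursion moves the lower end up by the fraction (L_n - L*_n)/(U*_n - L*_n) of D_(n-1)
   and the upper end down by the fraction (U*_n - U_n)/(U*_n - L*_n) of D_(n-1).  Whenever
   L*_n <= L_n <= U_n <= U*_n and L*_n < U*_n (which holds almost surely for all n at once),
   both fractions lie in [0,1] and add up to at most 1; this pure real-number fact gives the
   nesting of the intervals and the width identity pathwise, by induction on n.
   For the expectations we prove the stronger statement
       E(tildeL_n | F_(n,oo)) = L_n  and  E(tildeU_n | F_(n,oo)) = U_n   a.s.
   by induction: the tower property along F_(n+1,oo) <= F_(n,oo) together with the
   hypothesis E(L_n | F_(n+1,oo)) = E(L_n | F_(n+1)) turns the induction hypothesis into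
   E(tildeL_n | F_(n+1,oo)) = L*_(n+1), and the update weights are F_(n+1)-measurable, so they
   pull out of the conditional expectation. *)

lemma Fn_space [simp]: "space (Fn M L U n) = space M"
  by (simp add: Fn_def)

lemma Fn_generators_Pow: "(\<Union>j\<in>A. sets (Fn M L U j)) \<subseteq> Pow (space M)"
  using sets.space_closed[of "Fn M L U _"] by auto

lemma Finf_space [simp]: "space (Finf M L U k) = space M"
  unfolding Finf_def by (rule space_measure_of[OF Fn_generators_Pow])

lemma Finf_sets: "sets (Finf M L U k) = sigma_sets (space M) (\<Union>j\<in>{k..}. sets (Fn M L U j))"
  unfolding Finf_def by (rule sets_measure_of[OF Fn_generators_Pow])

lemma pair_measurable_Fn: "(\<lambda>x. (L n x, U n x)) \<in> measurable (Fn M L U n) (borel \<Otimes>\<^sub>M borel)"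
proof -
  have "(\<lambda>x. (L n x, U n x)) \<in> measurable (Fn M L U n) borel"
    unfolding Fn_def by (rule measurable_vimage_algebra1) auto
  then show ?thesis by (simp only: borel_prod)
qed

lemma L_measurable_Fn: "L n \<in> borel_measurable (Fn M L U n)"
  using measurable_compose[OF pair_measurable_Fn measurable_fst] by simp

lemma U_measurable_Fn: "U n \<in> borel_measurable (Fn M L U n)"
  using measurable_compose[OF pair_measurable_Fn measurable_snd] by simp

lemma subalgebra_Fn:
  assumes [measurable]: "L n \<in> borel_measurable M" "U n \<in> borel_measurable M"
  shows "subalgebra M (Fn M L U n)"
proof -
  have "(\<lambda>x. (L n x, U n x)) \<in> measurable M (borel \<Otimes>\<^sub>M borel)" by measurable
  then have "(\<lambda>x. (L n x, U n x)) \<in> measurable M borel" by (simp add: borel_prod)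
  then have "sets (Fn M L U n) \<subseteq> sets M"
    unfolding Fn_def by (rule sets_image_in_sets[OF refl])
  then show ?thesis unfolding subalgebra_def by simp
qed

lemma subalgebra_Finf:
  assumes "\<And>n. L n \<in> borel_measurable M" "\<And>n. U n \<in> borel_measurable M"
  shows "subalgebra M (Finf M L U k)"
proof -
  have "sets (Fn M L U j) \<subseteq> sets M" for j
    using subalgebra_Fn[of L j M U, OF assms(1)[of j] assms(2)[of j]] by (simp add: subalgebra_def)
  then have "(\<Union>j\<in>{k..}. sets (Fn M L U j)) \<subseteq> sets M" by (simp add: UN_subset_iff)
  then have "sigma_sets (space M) (\<Union>j\<in>{k..}. sets (Fn M L U j)) \<subseteq> sets M"
    by (rule sets.sigma_sets_subset)
  then show ?thesis unfolding subalgebra_def Finf_sets by simp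
qed

lemma subalgebra_Finf_Fn: "k \<le> n \<Longrightarrow> subalgebra (Finf M L U k) (Fn M L U n)"
  unfolding subalgebra_def Finf_sets by (simp; blast intro: sigma_sets.Basic)

lemma subalgebra_Finf_Finf: "k \<le> n \<Longrightarrow> subalgebra (Finf M L U k) (Finf M L U n)"
  unfolding subalgebra_def Finf_sets
  by (auto intro!: sigma_sets_mono) (meson atLeast_iff order_trans UN_I sigma_sets.Basic)

section \<open>One step of the renormalisation\<close>

lemma interval_step:
  fixes a b ls l u us :: real
  assumes "a \<le> b" "ls \<le> l" "l \<le> u" "u \<le> us" "ls < us"
  defines "a' \<equiv> a + (l - ls) / (us - ls) * (b - a)"
      and "b' \<equiv> b - (us - u) / (us - ls) * (b - a)"
  shows "a \<le> a'" "a' \<le> b'" "b' \<le> b" "b' - a' = (b - a) * ((u - l) / (us - ls))"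
proof -
  define p q r where "p = (l - ls) / (us - ls)" and "q = (us - u) / (us - ls)"
    and "r = (u - l) / (us - ls)"
  have nonneg: "0 \<le> p" "0 \<le> q" "0 \<le> r"
    unfolding p_def q_def r_def using assms(2-5) by simp_all
  have "p + q + r = (us - ls) / (us - ls)"
    unfolding p_def q_def r_def by (simp add: add_divide_distrib[symmetric])
  then have sum: "p + q + r = 1" using assms(5) by simp
  have ends: "a' = a + p * (b - a)" "b' = b - q * (b - a)"
    unfolding a'_def b'_def p_def q_def by simp_all
  have "b' - a' = (b - a) * (1 - p - q)"
    unfolding ends by (simp add: algebra_simps)
  also have "1 - p - q = r" using sum by simp
  finally have width: "b' - a' = (b - a) * r" .
  have "0 \<le> (b - a) * r" using nonneg assms(1) by simp
  then show "a' \<le> b'" using width by simp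
  show "a \<le> a'" "b' \<le> b" using nonneg assms(1) unfolding ends by simp_all
  show "b' - a' = (b - a) * ((u - l) / (us - ls))" using width by (simp add: r_def)
qed

section \<open>Two facts on conditional expectations\<close>

context sigma_finite_subalgebra
begin

lemma real_cond_exp_tower:
  assumes "subalgebra M G" "subalgebra G F" "integrable M f"
    and "g \<in> borel_measurable M" "AE x in M. real_cond_exp M G f x = g x"
  shows "AE x in M. real_cond_exp M F f x = real_cond_exp M F g x"
proof -
  have "AE x in M. real_cond_exp M F (real_cond_exp M G f) x = real_cond_exp M F f x"
    using assms(1-3) by (rule real_cond_exp_nested_subalg)
  moreover have "AE x in M. real_cond_exp M F (real_cond_exp M G f) x = real_cond_exp M F g x"
    using assms(4,5) by (intro real_cond_exp_cong) auto
  ultimately show ?thesis by eventually_elim simp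
qed

lemma real_cond_exp_weighted_diff:
  assumes "c \<in> borel_measurable F" "integrable M X" "integrable M Y"
    and "integrable M (\<lambda>x. c x * (Y x - X x))"
    and "AE x in M. real_cond_exp M F X x = a x" "AE x in M. real_cond_exp M F Y x = b x"
  shows "AE x in M. real_cond_exp M F (\<lambda>x. c x * (Y x - X x)) x = c x * (b x - a x)"
proof -
  have "(\<lambda>x. Y x - X x) \<in> borel_measurable M" using assms(2,3) by measurable
  then have "AE x in M. real_cond_exp M F (\<lambda>x. c x * (Y x - X x)) x
                        = c x * real_cond_exp M F (\<lambda>x. Y x - X x) x"
    by (rule real_cond_exp_mult[OF assms(1) _ assms(4)])
  moreover have "AE x in M. real_cond_exp M F (\<lambda>x. Y x - X x) x
                            = real_cond_exp M F Y x - real_cond_exp M F X x"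
    using assms(3,2) by (rule real_cond_exp_diff)
  ultimately show ?thesis using assms(5,6) by eventually_elim simp
qed

end

locale bracketing_sequences = prob_space M
  for M :: "'a measure" +
  fixes L U :: "nat \<Rightarrow> 'a \<Rightarrow> real"
  assumes L_measurable [measurable]: "L n \<in> borel_measurable M"
    and U_measurable [measurable]: "U n \<in> borel_measurable M"
    and L_0: "L 0 x = 0" and U_0: "U 0 x = 1"
    and L_tail: "AE x in M. real_cond_exp M (Finf M L U (Suc n)) (L n) x = Lstar M L U (Suc n) x"
    and U_tail: "AE x in M. real_cond_exp M (Finf M L U (Suc n)) (U n) x = Ustar M L U (Suc n) x"
    and bracketing: "AE x in M. Lstar M L U (Suc n) x \<le> L (Suc n) x \<and> L (Suc n) x \<le> U (Suc n) x
                        \<and> U (Suc n) x \<le> Ustar M L U (Suc n) x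
                        \<and> Lstar M L U (Suc n) x < Ustar M L U (Suc n) x"
begin

abbreviation "Ls \<equiv> Lstar M L U"
abbreviation "Us \<equiv> Ustar M L U"
abbreviation "tL \<equiv> tildeL M L U"
abbreviation "tU \<equiv> tildeU M L U"
abbreviation "Ftail \<equiv> Finf M L U"

definition lower_weight :: "nat \<Rightarrow> 'a \<Rightarrow> real" where
  "lower_weight n x = (L n x - Ls n x) / (Us n x - Ls n x)"

definition upper_weight :: "nat \<Rightarrow> 'a \<Rightarrow> real" where
  "upper_weight n x = (Us n x - U n x) / (Us n x - Ls n x)"

lemma tL_0 [simp]: "tL 0 x = 0" and tU_0 [simp]: "tU 0 x = 1"
  by (simp_all add: tildeL_def tildeU_def)

lemma tL_Suc: "tL (Suc n) x = tL n x + lower_weight (Suc n) x * (tU n x - tL n x)"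
  and tU_Suc: "tU (Suc n) x = tU n x - upper_weight (Suc n) x * (tU n x - tL n x)"
  by (simp_all add: tildeL_def tildeU_def lower_weight_def upper_weight_def Let_def)

lemma Ls_measurable [measurable]: "Ls n \<in> borel_measurable M"
  and Us_measurable [measurable]: "Us n \<in> borel_measurable M"
  by (simp_all add: Lstar_def Ustar_def)

lemma weights_measurable_Ftail:
  "lower_weight n \<in> borel_measurable (Ftail n)" "upper_weight n \<in> borel_measurable (Ftail n)"
proof -
  have sub: "subalgebra (Ftail n) (Fn M L U n)" by (rule subalgebra_Finf_Fn) simp
  have "Ls n \<in> borel_measurable (Fn M L U n)" "Us n \<in> borel_measurable (Fn M L U n)"
    unfolding Lstar_def Ustar_def by (rule borel_measurable_cond_exp)+
  with L_measurable_Fn U_measurable_Fn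
  have [measurable]: "L n \<in> borel_measurable (Ftail n)" "U n \<in> borel_measurable (Ftail n)"
    "Ls n \<in> borel_measurable (Ftail n)" "Us n \<in> borel_measurable (Ftail n)"
    by (blast intro: measurable_from_subalg[OF sub])+
  show "lower_weight n \<in> borel_measurable (Ftail n)" "upper_weight n \<in> borel_measurable (Ftail n)"
    unfolding lower_weight_def[abs_def] upper_weight_def[abs_def] by measurable
qed

lemma weights_measurable [measurable]:
  "lower_weight n \<in> borel_measurable M" "upper_weight n \<in> borel_measurable M"
  unfolding lower_weight_def[abs_def] upper_weight_def[abs_def] by measurable

lemma tilde_measurable [measurable]: "tL n \<in> borel_measurable M" "tU n \<in> borel_measurable M"
proof (induction n)
  case 0
  have initial: "tL 0 = (\<lambda>x. 0)" "tU 0 = (\<lambda>x. 1)" by (simp_all add: fun_eq_iff)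
  show "tL 0 \<in> borel_measurable M" "tU 0 \<in> borel_measurable M"
    unfolding initial by simp_all
next
  case (Suc n)
  have recursion: "tL (Suc n) = (\<lambda>x. tL n x + lower_weight (Suc n) x * (tU n x - tL n x))"
       "tU (Suc n) = (\<lambda>x. tU n x - upper_weight (Suc n) x * (tU n x - tL n x))"
    by (simp_all add: tL_Suc tU_Suc fun_eq_iff)
  show "tL (Suc n) \<in> borel_measurable M" "tU (Suc n) \<in> borel_measurable M"
    using Suc.IH unfolding recursion by measurable
qed

lemma subalgebra_Ftail: "sigma_finite_subalgebra M (Ftail k)"
  using subalgebra_Finf[of L M U, OF L_measurable U_measurable]
  by (intro finite_measure_subalgebra_is_sigma_finite)
     (simp add: finite_measure_subalgebra_def finite_measure_subalgebra_axioms_def)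

section \<open>Pathwise behaviour\<close>

definition regular :: "'a \<Rightarrow> bool" where
  "regular x \<longleftrightarrow> (\<forall>n. Ls (Suc n) x \<le> L (Suc n) x \<and> L (Suc n) x \<le> U (Suc n) x
                      \<and> U (Suc n) x \<le> Us (Suc n) x \<and> Ls (Suc n) x < Us (Suc n) x)"

lemma AE_regular: "AE x in M. regular x"
  unfolding regular_def using bracketing by (simp add: AE_all_countable)

lemma regularD:
  assumes "regular x"
  shows "Ls (Suc n) x \<le> L (Suc n) x" "L (Suc n) x \<le> U (Suc n) x" "U (Suc n) x \<le> Us (Suc n) x"
    "Ls (Suc n) x < Us (Suc n) x"
  using assms unfolding regular_def by auto

lemma weights_bounds:
  assumes "regular x"
  shows "0 \<le> lower_weight (Suc n) x" "lower_weight (Suc n) x \<le> 1"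
    "0 \<le> upper_weight (Suc n) x" "upper_weight (Suc n) x \<le> 1"
  using regularD[OF assms, of n]
  unfolding lower_weight_def upper_weight_def by (auto simp: divide_le_eq_1)

lemma tilde_step:
  assumes "regular x" "tL n x \<le> tU n x"
  shows "tL n x \<le> tL (Suc n) x" "tL (Suc n) x \<le> tU (Suc n) x" "tU (Suc n) x \<le> tU n x"
    "tU (Suc n) x - tL (Suc n) x
       = (tU n x - tL n x) * ((U (Suc n) x - L (Suc n) x) / (Us (Suc n) x - Ls (Suc n) x))"
proof -
  note step = interval_step[OF assms(2) regularD[OF assms(1), of n]]
  show "tL n x \<le> tL (Suc n) x" "tL (Suc n) x \<le> tU (Suc n) x" "tU (Suc n) x \<le> tU n x"
    "tU (Suc n) x - tL (Suc n) x
       = (tU n x - tL n x) * ((U (Suc n) x - L (Suc n) x) / (Us (Suc n) x - Ls (Suc n) x))"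
    using step unfolding tL_Suc tU_Suc lower_weight_def upper_weight_def by simp_all
qed

lemma tilde_bounds:
  assumes "regular x"
  shows "0 \<le> tL n x \<and> tL n x \<le> tU n x \<and> tU n x \<le> 1"
proof (induction n)
  case (Suc n)
  then show ?case using tilde_step[OF assms, of n] by linarith
qed simp

lemma AE_tilde_nested:
  "AE x in M. \<forall>n\<ge>1. 0 \<le> tL (n - 1) x \<and> tL (n - 1) x \<le> tL n x \<and> tL n x \<le> tU n x
      \<and> tU n x \<le> tU (n - 1) x \<and> tU (n - 1) x \<le> 1
      \<and> tU n x - tL n x = (tU (n - 1) x - tL (n - 1) x) * ((U n x - L n x) / (Us n x - Ls n x))"
  using AE_regular
proof eventually_elim
  case (elim x)
  show ?case
  proof (intro allI impI)
    fix n :: nat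
    assume "n \<ge> 1"
    then obtain m where n: "n = Suc m" by (cases n) auto
    show "0 \<le> tL (n - 1) x \<and> tL (n - 1) x \<le> tL n x \<and> tL n x \<le> tU n x
      \<and> tU n x \<le> tU (n - 1) x \<and> tU (n - 1) x \<le> 1
      \<and> tU n x - tL n x = (tU (n - 1) x - tL (n - 1) x) * ((U n x - L n x) / (Us n x - Ls n x))"
      unfolding n diff_Suc_1 using tilde_bounds[OF elim, of m] tilde_step[OF elim, of m]
      by (intro conjI) blast+
  qed
qed

section \<open>Conditional expectations of the renormalised ends\<close>

lemma tilde_integrable: "integrable M (tL n)" "integrable M (tU n)"
proof -
  have bounds: "norm (tL n x) \<le> 1" "norm (tU n x) \<le> 1" if "regular x" for x
    using tilde_bounds[OF that, of n] by auto
  have "AE x in M. norm (tL n x) \<le> 1"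
    using AE_regular by eventually_elim (rule bounds)
  then show "integrable M (tL n)" by (rule integrable_const_bound) measurable
  have "AE x in M. norm (tU n x) \<le> 1"
    using AE_regular by eventually_elim (rule bounds)
  then show "integrable M (tU n)" by (rule integrable_const_bound) measurable
qed

text \<open>The increments of the two ends, a weight in [0,1] times a width in [0,1], are integrable.\<close>

lemma increments_integrable:
  "integrable M (\<lambda>x. lower_weight (Suc n) x * (tU n x - tL n x))"
  "integrable M (\<lambda>x. upper_weight (Suc n) x * (tU n x - tL n x))"
proof -
  have width: "0 \<le> tU n x - tL n x" "tU n x - tL n x \<le> 1" if "regular x" for x
    using tilde_bounds[OF that, of n] by auto
  have "AE x in M. norm (lower_weight (Suc n) x * (tU n x - tL n x)) \<le> 1"
    using AE_regular
    by eventually_elim (use width weights_bounds in \<open>simp add: abs_mult mult_le_one\<close>)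
  then show "integrable M (\<lambda>x. lower_weight (Suc n) x * (tU n x - tL n x))"
    by (rule integrable_const_bound) measurable
  have "AE x in M. norm (upper_weight (Suc n) x * (tU n x - tL n x)) \<le> 1"
    using AE_regular
    by eventually_elim (use width weights_bounds in \<open>simp add: abs_mult mult_le_one\<close>)
  then show "integrable M (\<lambda>x. upper_weight (Suc n) x * (tU n x - tL n x))"
    by (rule integrable_const_bound) measurable
qed

text \<open>Combining the induction hypothesis at time n with the tail property of F_(n+1,oo).\<close>

lemma cond_exp_previous_ends:
  assumes "AE x in M. real_cond_exp M (Ftail n) (tL n) x = L n x"
    and "AE x in M. real_cond_exp M (Ftail n) (tU n) x = U n x"
  shows "AE x in M. real_cond_exp M (Ftail (Suc n)) (tL n) x = Ls (Suc n) x"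
    "AE x in M. real_cond_exp M (Ftail (Suc n)) (tU n) x = Us (Suc n) x"
proof -
  interpret F: sigma_finite_subalgebra M "Ftail (Suc n)" by (rule subalgebra_Ftail)
  have sub: "subalgebra M (Ftail n)" "subalgebra (Ftail n) (Ftail (Suc n))"
    using subalgebra_Finf[of L M U, OF L_measurable U_measurable] subalgebra_Finf_Finf[of n "Suc n"]
    by simp_all
  show "AE x in M. real_cond_exp M (Ftail (Suc n)) (tL n) x = Ls (Suc n) x"
    using F.real_cond_exp_tower[OF sub tilde_integrable(1) L_measurable assms(1)] L_tail
    by eventually_elim simp
  show "AE x in M. real_cond_exp M (Ftail (Suc n)) (tU n) x = Us (Suc n) x"
    using F.real_cond_exp_tower[OF sub tilde_integrable(2) U_measurable assms(2)] U_tail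
    by eventually_elim simp
qed

lemma cond_exp_tilde:
  "(AE x in M. real_cond_exp M (Ftail n) (tL n) x = L n x)
 \<and> (AE x in M. real_cond_exp M (Ftail n) (tU n) x = U n x)"
proof (induction n)
  case 0
  interpret F: sigma_finite_subalgebra M "Ftail 0" by (rule subalgebra_Ftail)
  have "tL 0 = (\<lambda>x. 0)" "tU 0 = (\<lambda>x. 1)" by auto
  then show ?case using F.real_cond_exp_F_meas[of "\<lambda>x. 0::real"]
      F.real_cond_exp_F_meas[of "\<lambda>x. 1::real"] by (simp add: L_0 U_0)
next
  case (Suc n)
  let ?F = "Ftail (Suc n)" and ?D = "\<lambda>x. tU n x - tL n x"
  interpret F: sigma_finite_subalgebra M ?F by (rule subalgebra_Ftail)
  note prev = cond_exp_previous_ends[OF Suc[THEN conjunct1] Suc[THEN conjunct2]]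
  have lower: "AE x in M. real_cond_exp M ?F (\<lambda>x. lower_weight (Suc n) x * ?D x) x
                        = lower_weight (Suc n) x * (Us (Suc n) x - Ls (Suc n) x)"
    by (rule F.real_cond_exp_weighted_diff[OF weights_measurable_Ftail(1) tilde_integrable
          increments_integrable(1) prev])
  have upper: "AE x in M. real_cond_exp M ?F (\<lambda>x. upper_weight (Suc n) x * ?D x) x
                        = upper_weight (Suc n) x * (Us (Suc n) x - Ls (Suc n) x)"
    by (rule F.real_cond_exp_weighted_diff[OF weights_measurable_Ftail(2) tilde_integrable
          increments_integrable(2) prev])
  have recursion: "tL (Suc n) = (\<lambda>x. tL n x + lower_weight (Suc n) x * ?D x)"
       "tU (Suc n) = (\<lambda>x. tU n x - upper_weight (Suc n) x * ?D x)"
    by (simp_all add: tL_Suc tU_Suc fun_eq_iff)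
  have weighted_gaps:
    "lower_weight (Suc n) x * (Us (Suc n) x - Ls (Suc n) x) = L (Suc n) x - Ls (Suc n) x"
    "upper_weight (Suc n) x * (Us (Suc n) x - Ls (Suc n) x) = Us (Suc n) x - U (Suc n) x"
    if "regular x" for x
    using regularD(4)[OF that, of n] by (simp_all add: lower_weight_def upper_weight_def)
  have "AE x in M. real_cond_exp M ?F (tL (Suc n)) x = L (Suc n) x"
    using F.real_cond_exp_add[OF tilde_integrable(1)[of n] increments_integrable(1)[of n]]
      prev(1) lower AE_regular
    unfolding recursion by eventually_elim (simp add: weighted_gaps)
  moreover have "AE x in M. real_cond_exp M ?F (tU (Suc n)) x = U (Suc n) x"
    using F.real_cond_exp_diff[OF tilde_integrable(2)[of n] increments_integrable(2)[of n]]
      prev(2) upper AE_regular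
    unfolding recursion by eventually_elim (simp add: weighted_gaps)
  ultimately show ?case ..
qed

lemma expectation_tilde: "expectation (tL n) = expectation (L n)" "expectation (tU n) = expectation (U n)"
proof -
  interpret F: sigma_finite_subalgebra M "Ftail n" by (rule subalgebra_Ftail)
  have "expectation (tL n) = expectation (real_cond_exp M (Ftail n) (tL n))"
    using F.real_cond_exp_int(2)[OF tilde_integrable(1)] by simp
  also have "\<dots> = expectation (L n)"
    using cond_exp_tilde[of n] by (auto intro: integral_cong_AE)
  finally show "expectation (tL n) = expectation (L n)" .
  have "expectation (tU n) = expectation (real_cond_exp M (Ftail n) (tU n))"
    using F.real_cond_exp_int(2)[OF tilde_integrable(2)] by simp
  also have "\<dots> = expectation (U n)"
    using cond_exp_tilde[of n] by (auto intro: integral_cong_AE)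
  finally show "expectation (tU n) = expectation (U n)" .
qed

end

theorem mainTheorem4:
  fixes M :: "'a measure" and L U :: "nat \<Rightarrow> 'a \<Rightarrow> real"
    and l u :: "nat \<Rightarrow> real" and s :: real
  assumes "prob_space M"
    and "0 \<le> s" "s \<le> 1"
    and "\<And>n. L n \<in> borel_measurable M" "\<And>n. U n \<in> borel_measurable M"
    and "\<And>x. L 0 x = 0" "\<And>x. U 0 x = 1"
    and "\<And>n. AE x in M. L n x \<le> U n x \<and> 0 \<le> L n x \<and> L n x \<le> 1 \<and> 0 \<le> U n x \<and> U n x \<le> 1"
    and "\<And>n. prob_space.expectation M (L n) = l n"
    and "\<And>n. prob_space.expectation M (U n) = u n"
    and "incseq l" "l \<longlonglongrightarrow> s" "decseq u" "u \<longlonglongrightarrow> s"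
    and "\<And>n. n \<ge> 1 \<Longrightarrow> AE x in M. real_cond_exp M (Finf M L U n) (L (n - 1)) x
                                      = real_cond_exp M (Fn M L U n) (L (n - 1)) x"
    and "\<And>n. n \<ge> 1 \<Longrightarrow> AE x in M. real_cond_exp M (Fn M L U n) (L (n - 1)) x \<le> L n x"
    and "\<And>n. n \<ge> 1 \<Longrightarrow> AE x in M. real_cond_exp M (Finf M L U n) (U (n - 1)) x
                                      = real_cond_exp M (Fn M L U n) (U (n - 1)) x"
    and "\<And>n. n \<ge> 1 \<Longrightarrow> AE x in M. real_cond_exp M (Fn M L U n) (U (n - 1)) x \<ge> U n x"
    and "\<And>n. n \<ge> 1 \<Longrightarrow> AE x in M. Ustar M L U n x > Lstar M L U n x"
  shows "(AE x in M. \<forall>n\<ge>1.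
            0 \<le> tildeL M L U (n - 1) x \<and>
            tildeL M L U (n - 1) x \<le> tildeL M L U n x \<and>
            tildeL M L U n x \<le> tildeU M L U n x \<and>
            tildeU M L U n x \<le> tildeU M L U (n - 1) x \<and>
            tildeU M L U (n - 1) x \<le> 1 \<and>
            tildeU M L U n x - tildeL M L U n x
              = (tildeU M L U (n - 1) x - tildeL M L U (n - 1) x)
                * ((U n x - L n x) / (Ustar M L U n x - Lstar M L U n x)))
       \<and> (\<forall>n\<ge>1. prob_space.expectation M (tildeL M L U n) = prob_space.expectation M (L n)
                 \<and> prob_space.expectation M (L n) = l n
                 \<and> prob_space.expectation M (tildeU M L U n) = prob_space.expectation M (U n)
                 \<and> prob_space.expectation M (U n) = u n)"
proof -
  have "bracketing_sequences M L U"
  proof (intro bracketing_sequences.intro[OF assms(1)] bracketing_sequences_axioms.intro)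
    fix n
    show "AE x in M. real_cond_exp M (Finf M L U (Suc n)) (L n) x = Lstar M L U (Suc n) x"
         "AE x in M. real_cond_exp M (Finf M L U (Suc n)) (U n) x = Ustar M L U (Suc n) x"
      using assms(15,17)[of "Suc n"] by (simp_all add: Lstar_def Ustar_def)
    show "AE x in M. Lstar M L U (Suc n) x \<le> L (Suc n) x \<and> L (Suc n) x \<le> U (Suc n) x
            \<and> U (Suc n) x \<le> Ustar M L U (Suc n) x \<and> Lstar M L U (Suc n) x < Ustar M L U (Suc n) x"
      using assms(8)[of "Suc n"] assms(16,18,19)[of "Suc n", simplified]
      by eventually_elim (simp add: Lstar_def Ustar_def)
  qed (use assms(4-7) in auto)
  then interpret bracketing_sequences M L U .
  have "\<forall>n\<ge>1. expectation (tL n) = expectation (L n) \<and> expectation (L n) = l n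
            \<and> expectation (tU n) = expectation (U n) \<and> expectation (U n) = u n"
    using expectation_tilde assms(9,10) by blast
  with AE_tilde_nested show ?thesis by (rule conjI)
qed

end
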